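(* For every strict partition $\lambda$, as formal power series, $$K_\lambda(x_1,x_2,\ldots)=(-1)^{|\lambda|}\, GP_\lambda\!\left(\frac{-x_1}{1-x_1},\frac{-x_2}{1-x_2},\ldots\right).$$
   Context: A strict partition $\lambda=(\lambda_1>\dots>\lambda_\ell>0)$ has shifted shape consisting of the boxes $(i,j)$ with $1\le i\le\ell$, $i\le j\le i+\lambda_i-1$; $|\lambda|=\sum\lambda_i$; boxes $(i,i)$ form the main diagonal. Order $1'<1<2'<2<\cdots$. A weak set-valued shifted tableau of shape $\lambda$ is a filling of the shifted shape with finite nonempty multisets of primed and unprimed positive integers such that: (1) the smallest element in each box is $\ge$ the largest element in the box directly to its left; (2) the smallest element in each box is $\ge$ the largest element in the box directly above it; (3) no primed entries on the main diagonal; (4) each unprimed integer appears in at most one box of each column; (5) each primed integer appears in at most one box of each row. A set-valued shifted tableau is the same but with finite nonempty sets instead of multisets. For either kind, $x^T=\prod_i x_i^{a_i}$ with $a_i$ the number of occurrences of $i$ and $i'$ in $T$, and $|T|$ is the total degree of $x^T$. $K_\lambda=\sum_T x^T$ over weak set-valued shifted tableaux of shape $\lambda$; $GP_\lambda=\sum_T(-1)^{|T|-|\lambda|}x^T$ over set-valued shifted tableaux of shape $\lambda$. *)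

theory Defs
  imports Main "HOL-Library.Multiset" "HOL-Computational_Algebra.Formal_Power_Series"
begin

text \<open>A strict partition is a list lam = [lam_1, ..., lam_l] of positive integers,
  strictly decreasing. Rows and columns are 1-indexed; lam_i = lam ! (i - 1).\<close>

definition strict_partition :: "nat list \<Rightarrow> bool" where
  "strict_partition lam \<longleftrightarrow> sorted_wrt (>) lam \<and> 0 \<notin> set lam"

definition shifted_shape :: "nat list \<Rightarrow> (nat \<times> nat) set" where
  "shifted_shape lam = {(i, j). 1 \<le> i \<and> i \<le> length lam \<and> i \<le> j \<and> j + 1 \<le> i + lam ! (i - 1)}"

definition psize :: "nat list \<Rightarrow> nat" where
  "psize lam = sum_list lam"

text \<open>An entry is a pair (k, p) with k a positive integer and p = True iff the entry is primed
  (i.e. it is k'). The total order 1' < 1 < 2' < 2 < ... is given by the key 2k - [p].\<close>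

type_synonym entry = "nat \<times> bool"

definition ekey :: "entry \<Rightarrow> nat" where
  "ekey e = 2 * fst e - (if snd e then 1 else 0)"

definition weak_svt :: "nat list \<Rightarrow> (nat \<times> nat \<Rightarrow> entry multiset) \<Rightarrow> bool" where
  "weak_svt lam T \<longleftrightarrow>
     (\<forall>b. b \<notin> shifted_shape lam \<longrightarrow> T b = {#}) \<and>
     (\<forall>b \<in> shifted_shape lam. T b \<noteq> {#} \<and> (\<forall>e \<in># T b. 1 \<le> fst e)) \<and>
     (\<forall>i j. (i, j) \<in> shifted_shape lam \<longrightarrow> (i, j - 1) \<in> shifted_shape lam \<longrightarrow> 1 \<le> j \<longrightarrow>
        (\<forall>x \<in># T (i, j). \<forall>y \<in># T (i, j - 1). ekey y \<le> ekey x)) \<and>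
     (\<forall>i j. (i, j) \<in> shifted_shape lam \<longrightarrow> (i - 1, j) \<in> shifted_shape lam \<longrightarrow> 1 \<le> i \<longrightarrow>
        (\<forall>x \<in># T (i, j). \<forall>y \<in># T (i - 1, j). ekey y \<le> ekey x)) \<and>
     (\<forall>i. (i, i) \<in> shifted_shape lam \<longrightarrow> (\<forall>e \<in># T (i, i). \<not> snd e)) \<and>
     (\<forall>k j. card {i. (i, j) \<in> shifted_shape lam \<and> (k, False) \<in># T (i, j)} \<le> 1) \<and>
     (\<forall>k i. card {j. (i, j) \<in> shifted_shape lam \<and> (k, True) \<in># T (i, j)} \<le> 1)"

definition wcontent :: "nat list \<Rightarrow> (nat \<times> nat \<Rightarrow> entry multiset) \<Rightarrow> nat \<Rightarrow> nat" where
  "wcontent lam T k = (\<Sum>b \<in> shifted_shape lam. count (T b) (k, False) + count (T b) (k, True))"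

definition svt :: "nat list \<Rightarrow> (nat \<times> nat \<Rightarrow> entry set) \<Rightarrow> bool" where
  "svt lam T \<longleftrightarrow>
     (\<forall>b. b \<notin> shifted_shape lam \<longrightarrow> T b = {}) \<and>
     (\<forall>b \<in> shifted_shape lam. finite (T b) \<and> T b \<noteq> {} \<and> (\<forall>e \<in> T b. 1 \<le> fst e)) \<and>
     (\<forall>i j. (i, j) \<in> shifted_shape lam \<longrightarrow> (i, j - 1) \<in> shifted_shape lam \<longrightarrow> 1 \<le> j \<longrightarrow>
        (\<forall>x \<in> T (i, j). \<forall>y \<in> T (i, j - 1). ekey y \<le> ekey x)) \<and>
     (\<forall>i j. (i, j) \<in> shifted_shape lam \<longrightarrow> (i - 1, j) \<in> shifted_shape lam \<longrightarrow> 1 \<le> i \<longrightarrow>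
        (\<forall>x \<in> T (i, j). \<forall>y \<in> T (i - 1, j). ekey y \<le> ekey x)) \<and>
     (\<forall>i. (i, i) \<in> shifted_shape lam \<longrightarrow> (\<forall>e \<in> T (i, i). \<not> snd e)) \<and>
     (\<forall>k j. card {i. (i, j) \<in> shifted_shape lam \<and> (k, False) \<in> T (i, j)} \<le> 1) \<and>
     (\<forall>k i. card {j. (i, j) \<in> shifted_shape lam \<and> (k, True) \<in> T (i, j)} \<le> 1)"

definition scontent :: "nat list \<Rightarrow> (nat \<times> nat \<Rightarrow> entry set) \<Rightarrow> nat \<Rightarrow> nat" where
  "scontent lam T k = (\<Sum>b \<in> shifted_shape lam. card {p. (k, p) \<in> T b})"

definition ssize :: "nat list \<Rightarrow> (nat \<times> nat \<Rightarrow> entry set) \<Rightarrow> nat" where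
  "ssize lam T = (\<Sum>b \<in> shifted_shape lam. card (T b))"

text \<open>A formal power series in the variables x_1, x_2, ... (over rat) is represented by its
  coefficient function on exponent vectors m :: nat \<Rightarrow> nat (m k = exponent of x_k; monomials
  are the finitely supported m).\<close>

type_synonym mps = "(nat \<Rightarrow> nat) \<Rightarrow> rat"

definition K_series :: "nat list \<Rightarrow> mps" where
  "K_series lam m = of_nat (card {T. weak_svt lam T \<and> wcontent lam T = m})"

definition GP_series :: "nat list \<Rightarrow> mps" where
  "GP_series lam m =
     (\<Sum>T \<in> {T. svt lam T \<and> scontent lam T = m}. (-1) ^ (ssize lam T - psize lam))"

text \<open>Substitution x_k \<mapsto> g(x_k) for every variable, where g is a univariate formal power series
  with zero constant term: F(g(x_1), g(x_2), ...) = \<Sum>_a F_a \<Prod>_k g(x_k)^(a_k).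
  Its coefficient at x^b is \<Sum>_a F_a \<Prod>_k [x^(b_k)] g^(a_k); only a \<le> b contribute since
  g^(a_k) has order \<ge> a_k, and factors with a_k = b_k = 0 equal 1.\<close>

definition subst_each_var :: "rat fps \<Rightarrow> mps \<Rightarrow> mps" where
  "subst_each_var g F b =
     (\<Sum>a \<in> {a. \<forall>k. a k \<le> b k}. F a * (\<Prod>k \<in> {k. b k \<noteq> 0}. fps_nth (g ^ a k) (b k)))"

end

theory Submission
  imports Defs "HOL-Library.FuncSet"
begin

text \<open>Forgetting multiplicities turns a weak set-valued shifted tableau T into a set-valued
  shifted tableau S, and the tableau conditions on T are exactly those on S. Conversely, if S
  contains the letter k (primed or not) a_k times, the weak tableaux over S with content b are
  obtained by choosing, independently for each k, positive multiplicities of these a_k entries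
  summing to b_k: a composition, counted by binom(b_k - 1, b_k - a_k). On the other side, the
  coefficient of x^(b_k) in (-x/(1-x))^(a_k) is (-1)^(a_k) binom(b_k - 1, b_k - a_k), so the
  sign (-1)^(|S| - |lam|) of GP_lam and the sign (-1)^|S| of the substitution combine to
  (-1)^|lam|.\<close>

definition compositions :: "'a set \<Rightarrow> nat \<Rightarrow> ('a \<Rightarrow> nat) set" where
  "compositions E m = {\<nu>. {x. \<nu> x \<noteq> 0} = E \<and> sum \<nu> E = m}"

lemma size_eq_sum_count:
  assumes "finite E" and "set_mset M \<subseteq> E"
  shows "size M = sum (count M) E"
proof -
  have "size M = sum (count M) (set_mset M)"
    by (simp add: size_multiset_overloaded_eq)
  also have "\<dots> = sum (count M) E"
    by (rule sum.mono_neutral_left) (use assms in \<open>auto simp: not_in_iff\<close>)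
  finally show ?thesis .
qed

lemma bij_betw_multisets_of_size_compositions:
  assumes "finite E"
  shows "bij_betw (\<lambda>M x. if x \<in> E then count M x + 1 else 0)
           (multisets_of_size E n) (compositions E (n + card E))"
proof (rule bij_betw_byWitness[where f' = "\<lambda>\<nu>. Abs_multiset (\<lambda>x. \<nu> x - 1)"])
  let ?incr = "\<lambda>M x. if x \<in> E then count M x + 1 else 0"
  have count_Abs: "count (Abs_multiset (\<lambda>x. \<nu> x - 1)) = (\<lambda>x. \<nu> x - 1)" if "{x. \<nu> x \<noteq> 0} = E" for \<nu>
  proof -
    have "finite {x. 0 < \<nu> x - 1}"
      using that by (intro finite_subset[OF _ assms]) auto
    then show ?thesis
      by simp
  qed
  show "\<forall>M \<in> multisets_of_size E n. Abs_multiset (\<lambda>x. ?incr M x - 1) = M"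
  proof
    fix M assume "M \<in> multisets_of_size E n"
    then have "(\<lambda>x. ?incr M x - 1) = count M"
      by (auto simp: multisets_of_size_def fun_eq_iff not_in_iff)
    then show "Abs_multiset (\<lambda>x. ?incr M x - 1) = M"
      by simp
  qed
  show "\<forall>\<nu> \<in> compositions E (n + card E). ?incr (Abs_multiset (\<lambda>x. \<nu> x - 1)) = \<nu>"
  proof
    fix \<nu> assume "\<nu> \<in> compositions E (n + card E)"
    then have support: "{x. \<nu> x \<noteq> 0} = E"
      by (simp add: compositions_def)
    have "?incr (Abs_multiset (\<lambda>x. \<nu> x - 1)) x = \<nu> x" for x
      unfolding count_Abs[OF support] using support by (cases "x \<in> E") auto
    then show "?incr (Abs_multiset (\<lambda>x. \<nu> x - 1)) = \<nu>"
      by blast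
  qed
  show "?incr ` multisets_of_size E n \<subseteq> compositions E (n + card E)"
  proof
    fix \<nu> assume "\<nu> \<in> ?incr ` multisets_of_size E n"
    then obtain M where M: "set_mset M \<subseteq> E" "size M = n" and \<nu>: "\<nu> = ?incr M"
      by (auto simp: multisets_of_size_def)
    have "sum \<nu> E = size M + card E"
      using size_eq_sum_count[OF assms M(1)] by (simp add: \<nu> sum_Suc)
    then show "\<nu> \<in> compositions E (n + card E)"
      using M by (auto simp: compositions_def \<nu>)
  qed
  show "(\<lambda>\<nu>. Abs_multiset (\<lambda>x. \<nu> x - 1)) ` compositions E (n + card E) \<subseteq> multisets_of_size E n"
  proof
    fix M assume "M \<in> (\<lambda>\<nu>. Abs_multiset (\<lambda>x. \<nu> x - 1)) ` compositions E (n + card E)"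
    then obtain \<nu> where \<nu>: "{x. \<nu> x \<noteq> 0} = E" "sum \<nu> E = n + card E"
      and M: "M = Abs_multiset (\<lambda>x. \<nu> x - 1)"
      by (auto simp: compositions_def)
    have count_M: "count M = (\<lambda>x. \<nu> x - 1)"
      unfolding M by (rule count_Abs[OF \<nu>(1)])
    have sub: "set_mset M \<subseteq> E"
      using \<nu>(1) by (auto simp: set_mset_def count_M)
    have "n + card E = sum (\<lambda>x. (\<nu> x - 1) + 1) E"
      using \<nu> by (auto intro!: sum.cong)
    also have "\<dots> = size M + card E"
      using size_eq_sum_count[OF assms sub] by (simp add: count_M sum_Suc)
    finally show "M \<in> multisets_of_size E n"
      using sub by (simp add: multisets_of_size_def)
  qed
qed

text \<open>No nonemptiness hypothesis is needed: for E = {} the right-hand side is 0 for m > 0 and,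
  by truncated subtraction, 1 for m = 0. This is what lets letters absent from a tableau be treated
  uniformly below.\<close>

lemma card_compositions:
  assumes "finite E" and "card E \<le> m"
  shows "card (compositions E m) = (m - 1) choose (m - card E)"
proof -
  have "card (compositions E m) = card (multisets_of_size E (m - card E))"
    using bij_betw_multisets_of_size_compositions[OF assms(1), of "m - card E"] assms(2)
    by (simp add: bij_betw_same_card)
  also have "\<dots> = (card E + (m - card E) - 1) choose (m - card E)"
    by (rule card_multisets_of_size[OF assms(1)])
  finally show ?thesis
    using assms(2) by simp
qed

lemma finite_compositions:
  assumes "finite E"
  shows "finite (compositions E m)"
proof (rule finite_subset)
  show "compositions E m \<subseteq> {\<nu>. \<forall>x. (x \<in> E \<longrightarrow> \<nu> x \<in> {..m}) \<and> (x \<notin> E \<longrightarrow> \<nu> x = 0)}"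
    using assms by (auto simp: compositions_def intro: member_le_sum)
  show "finite {\<nu>. \<forall>x. (x \<in> E \<longrightarrow> \<nu> x \<in> {..m}) \<and> (x \<notin> E \<longrightarrow> \<nu> x = 0)}"
    by (intro finite_set_of_finite_funs assms finite_atMost)
qed

lemma bij_betw_fibrewise_compositions:
  assumes "f ` D \<subseteq> K"
  shows "bij_betw (\<lambda>\<nu>. \<lambda>k\<in>K. \<lambda>x. if f x = k then \<nu> x else 0)
           {\<nu>. {x. \<nu> x \<noteq> 0} = D \<and> (\<forall>k\<in>K. sum \<nu> {x\<in>D. f x = k} = b k)}
           (\<Pi>\<^sub>E k\<in>K. compositions {x\<in>D. f x = k} (b k))"
proof (rule bij_betw_byWitness[where f' = "\<lambda>F x. if f x \<in> K then F (f x) x else 0"])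
  show "\<forall>\<nu> \<in> {\<nu>. {x. \<nu> x \<noteq> 0} = D \<and> (\<forall>k\<in>K. sum \<nu> {x\<in>D. f x = k} = b k)}.
          (\<lambda>x. if f x \<in> K then (\<lambda>k\<in>K. \<lambda>x. if f x = k then \<nu> x else 0) (f x) x else 0) = \<nu>"
    using assms by (auto simp: fun_eq_iff)
  show "\<forall>F \<in> \<Pi>\<^sub>E k\<in>K. compositions {x\<in>D. f x = k} (b k).
          (\<lambda>k\<in>K. \<lambda>x. if f x = k then (if f x \<in> K then F (f x) x else 0) else 0) = F"
    by (force simp: fun_eq_iff compositions_def PiE_def extensional_def)
  show "(\<lambda>\<nu>. \<lambda>k\<in>K. \<lambda>x. if f x = k then \<nu> x else 0)
          ` {\<nu>. {x. \<nu> x \<noteq> 0} = D \<and> (\<forall>k\<in>K. sum \<nu> {x\<in>D. f x = k} = b k)}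
        \<subseteq> (\<Pi>\<^sub>E k\<in>K. compositions {x\<in>D. f x = k} (b k))"
    by (auto simp: compositions_def split: if_splits intro!: sum.cong)
  show "(\<lambda>F x. if f x \<in> K then F (f x) x else 0) ` (\<Pi>\<^sub>E k\<in>K. compositions {x\<in>D. f x = k} (b k))
        \<subseteq> {\<nu>. {x. \<nu> x \<noteq> 0} = D \<and> (\<forall>k\<in>K. sum \<nu> {x\<in>D. f x = k} = b k)}"
    using assms by (force simp: compositions_def intro!: sum.cong)
qed

lemma bij_betw_count_multiset_fillings:
  assumes "\<And>i. finite (S i)"
  shows "bij_betw (\<lambda>T (i, e). count (T i) e) {T. \<forall>i. set_mset (T i) = S i}
           {\<nu>. {x. \<nu> x \<noteq> 0} = Sigma UNIV S}"
proof (rule bij_betw_byWitness[where f' = "\<lambda>\<nu> i. Abs_multiset (\<lambda>e. \<nu> (i, e))"])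
  have count_Abs: "count (Abs_multiset (\<lambda>e. \<nu> (i, e))) = (\<lambda>e. \<nu> (i, e))"
    if "{x. \<nu> x \<noteq> 0} = Sigma UNIV S" for \<nu> i
  proof -
    have "{e. 0 < \<nu> (i, e)} = S i"
      using that by blast
    then show ?thesis
      using assms by simp
  qed
  show "\<forall>T \<in> {T. \<forall>i. set_mset (T i) = S i}. (\<lambda>i. Abs_multiset (\<lambda>e. case (i, e) of (i, e) \<Rightarrow> count (T i) e)) = T"
    by simp
  show "\<forall>\<nu> \<in> {\<nu>. {x. \<nu> x \<noteq> 0} = Sigma UNIV S}. (\<lambda>(i, e). count (Abs_multiset (\<lambda>e. \<nu> (i, e))) e) = \<nu>"
    by (simp add: count_Abs)
  show "(\<lambda>T (i, e). count (T i) e) ` {T. \<forall>i. set_mset (T i) = S i} \<subseteq> {\<nu>. {x. \<nu> x \<noteq> 0} = Sigma UNIV S}"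
    by (auto simp: count_eq_zero_iff)
  show "(\<lambda>\<nu> i. Abs_multiset (\<lambda>e. \<nu> (i, e))) ` {\<nu>. {x. \<nu> x \<noteq> 0} = Sigma UNIV S} \<subseteq> {T. \<forall>i. set_mset (T i) = S i}"
  proof (intro subsetI CollectI allI)
    fix T i assume "T \<in> (\<lambda>\<nu> i. Abs_multiset (\<lambda>e. \<nu> (i, e))) ` {\<nu>. {x. \<nu> x \<noteq> 0} = Sigma UNIV S}"
    then obtain \<nu> where \<nu>: "{x. \<nu> x \<noteq> 0} = Sigma UNIV S" and T: "T = (\<lambda>i. Abs_multiset (\<lambda>e. \<nu> (i, e)))"
      by blast
    show "set_mset (T i) = S i"
      using \<nu> by (auto simp: T set_mset_def count_Abs)
  qed
qed

lemma fps_nth_power_neg_X_div_one_minus_X: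
  assumes "1 \<le> m" and "n \<le> m"
  shows "fps_nth ((- fps_X / (1 - fps_X) :: 'a :: field_char_0 fps) ^ n) m
           = (-1) ^ n * of_nat ((m - 1) choose (m - n))"
proof (cases "n = 0")
  case True
  then show ?thesis
    using assms(1) by simp
next
  case False
  have "- fps_X / (1 - fps_X) = (-1) * (fps_X * inverse (1 - fps_X :: 'a fps))"
    by (simp add: fps_divide_unit)
  then have "(- fps_X / (1 - fps_X)) ^ n = (-1) ^ n * (fps_X ^ n * inverse ((1 - fps_X :: 'a fps) ^ n))"
    by (simp only: power_mult_distrib fps_inverse_power)
  moreover have "inverse ((1 - fps_X :: 'a fps) ^ n) = Abs_fps (\<lambda>k. of_nat ((n + k - 1) choose k))"
    using one_minus_const_fps_X_neg_power'[of n 1] False by simp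
  moreover have "fps_nth ((-1) ^ n * F) k = (-1) ^ n * fps_nth F k" for F :: "'a fps" and k
    by (induction n) (simp_all flip: fps_const_neg)
  ultimately show ?thesis
    using assms by (simp add: fps_X_power_mult_nth)
qed

lemma shifted_shape_eq_Sigma:
  "shifted_shape lam = Sigma {1..length lam} (\<lambda>i. {i..<i + lam ! (i - 1)})"
  unfolding shifted_shape_def by auto

lemma finite_shifted_shape [simp]: "finite (shifted_shape lam)"
  unfolding shifted_shape_eq_Sigma by auto

lemma card_shifted_shape: "card (shifted_shape lam) = psize lam"
proof -
  have "card (shifted_shape lam) = (\<Sum>i = 1..length lam. lam ! (i - 1))"
    unfolding shifted_shape_eq_Sigma by simp
  also have "\<dots> = (\<Sum>i<length lam. lam ! i)"
    by (rule sum.reindex_bij_witness[where i = Suc and j = "\<lambda>i. i - 1"]) auto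
  finally show ?thesis
    by (simp add: psize_def sum_list_sum_nth atLeast0LessThan)
qed

lemma weak_svt_iff_svt_set_mset: "weak_svt lam T \<longleftrightarrow> svt lam (\<lambda>box. set_mset (T box))"
  unfolding weak_svt_def svt_def by auto

lemma svt_empty_outside_shape: "svt lam S \<Longrightarrow> box \<notin> shifted_shape lam \<Longrightarrow> S box = {}"
  unfolding svt_def by blast

lemma svt_finite_box: "svt lam S \<Longrightarrow> finite (S box)"
  using svt_empty_outside_shape[of lam S box] unfolding svt_def
  by (cases "box \<in> shifted_shape lam") auto

lemma psize_le_ssize:
  assumes "svt lam S"
  shows "psize lam \<le> ssize lam S"
proof -
  have "psize lam = (\<Sum>box\<in>shifted_shape lam. 1)"
    by (simp add: card_shifted_shape)
  also have "\<dots> \<le> ssize lam S"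
    unfolding ssize_def using assms
    by (intro sum_mono) (auto simp: svt_def Suc_le_eq card_gt_0_iff)
  finally show ?thesis .
qed

lemma card_entries_of_value:
  "card {p. (k, p) \<in> X} = card {e \<in> X. fst e = k}"
proof -
  have "{e \<in> X. fst e = k} = Pair k ` {p. (k, p) \<in> X}"
    by force
  then show ?thesis
    by (simp add: card_image inj_on_def)
qed

lemma finite_entries_of_value: "finite {e \<in> X. fst e = (k :: nat)}" for X :: "entry set"
  by (rule finite_subset[of _ "{k} \<times> UNIV"]) auto

lemma scontent_eq_card_entries:
  "scontent lam S k = card {(box, e). box \<in> shifted_shape lam \<and> e \<in> S box \<and> fst e = k}"
proof -
  have "{(box, e). box \<in> shifted_shape lam \<and> e \<in> S box \<and> fst e = k}
          = Sigma (shifted_shape lam) (\<lambda>box. {e \<in> S box. fst e = k})"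
    by auto
  then show ?thesis
    by (simp add: scontent_def card_entries_of_value finite_entries_of_value)
qed

lemma wcontent_eq_sum_count:
  assumes "\<And>box. set_mset (T box) = S box"
  shows "wcontent lam T k
           = (\<Sum>(box, e) \<in> {(box, e). box \<in> shifted_shape lam \<and> e \<in> S box \<and> fst e = k}. count (T box) e)"
proof -
  have "count (T box) (k, False) + count (T box) (k, True) = (\<Sum>e \<in> {e \<in> S box. fst e = k}. count (T box) e)"
    for box
  proof -
    have "(\<Sum>e \<in> {e \<in> S box. fst e = k}. count (T box) e) = (\<Sum>e \<in> {k} \<times> UNIV. count (T box) e)"
      using assms by (intro sum.mono_neutral_left) (auto simp: not_in_iff[symmetric])
    then show ?thesis
      by (simp add: UNIV_bool)
  qed
  moreover have "{(box, e). box \<in> shifted_shape lam \<and> e \<in> S box \<and> fst e = k}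
          = Sigma (shifted_shape lam) (\<lambda>box. {e \<in> S box. fst e = k})"
    by auto
  ultimately show ?thesis
    by (simp add: wcontent_def sum.Sigma finite_entries_of_value)
qed

lemma scontent_pos_if_entry:
  assumes "svt lam S" and "(k, p) \<in> S box"
  shows "0 < scontent lam S k"
proof -
  have "box \<in> shifted_shape lam"
    using assms svt_empty_outside_shape by fastforce
  then have "(box, (k, p)) \<in> {(box, e). box \<in> shifted_shape lam \<and> e \<in> S box \<and> fst e = k}"
    using assms(2) by simp
  moreover have "finite {(box, e). box \<in> shifted_shape lam \<and> e \<in> S box \<and> fst e = k}"
    by (rule finite_subset[of _ "Sigma (shifted_shape lam) (\<lambda>box. {e \<in> S box. fst e = k})"])
      (auto simp: finite_entries_of_value)
  ultimately show ?thesis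
    unfolding scontent_eq_card_entries using card_gt_0_iff by blast
qed

lemma ssize_eq_sum_scontent:
  assumes "svt lam S" and "finite K" and "\<And>box e. e \<in> S box \<Longrightarrow> fst e \<in> K"
  shows "ssize lam S = (\<Sum>k\<in>K. scontent lam S k)"
proof -
  have "card (S box) = (\<Sum>k\<in>K. card {e \<in> S box. fst e = k})" for box
  proof -
    have "fst ` S box \<subseteq> K"
      using assms(3) by blast
    from sum.group[OF svt_finite_box[OF assms(1)] assms(2) this, where h = "\<lambda>_. 1::nat"]
    show ?thesis
      by simp
  qed
  then have "ssize lam S = (\<Sum>box\<in>shifted_shape lam. \<Sum>k\<in>K. card {p. (k, p) \<in> S box})"
    by (simp add: ssize_def card_entries_of_value)
  also have "\<dots> = (\<Sum>k\<in>K. scontent lam S k)"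
    unfolding scontent_def by (rule sum.swap)
  finally show ?thesis .
qed

lemma entry_value_in_support:
  assumes "svt lam S" and "scontent lam S \<le> b" and "e \<in> S box"
  shows "b (fst e) \<noteq> 0"
proof -
  have "0 < scontent lam S (fst e)"
    using scontent_pos_if_entry[OF assms(1), of "fst e" "snd e" box] assms(3) by simp
  then show ?thesis
    using le_funD[OF assms(2), of "fst e"] by simp
qed

lemma finite_svt_bounded_content:
  assumes "finite {k. b k \<noteq> 0}"
  shows "finite {S. svt lam S \<and> scontent lam S \<le> b}"
proof (rule finite_subset)
  let ?Fillings = "{S. \<forall>box. (box \<in> shifted_shape lam \<longrightarrow> S box \<in> Pow ({k. b k \<noteq> 0} \<times> (UNIV :: bool set)))
                              \<and> (box \<notin> shifted_shape lam \<longrightarrow> S box = {})}"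
  show "{S. svt lam S \<and> scontent lam S \<le> b} \<subseteq> ?Fillings"
    using entry_value_in_support svt_empty_outside_shape by fastforce
  show "finite ?Fillings"
    using assms by (intro finite_set_of_finite_funs) auto
qed

lemma weak_svt_with_support_iff:
  assumes S: "svt lam S" and le: "scontent lam S \<le> b" and T: "\<And>box. set_mset (T box) = S box"
  shows "weak_svt lam T \<and> wcontent lam T = b \<longleftrightarrow> (\<forall>k. b k \<noteq> 0 \<longrightarrow> wcontent lam T k = b k)"
proof -
  have "(\<lambda>box. set_mset (T box)) = S"
    using T by blast
  then have "weak_svt lam T"
    using S by (simp add: weak_svt_iff_svt_set_mset)
  moreover have "wcontent lam T k = b k \<longleftrightarrow> (b k \<noteq> 0 \<longrightarrow> wcontent lam T k = b k)" for k
  proof (cases "b k = 0")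
    case True
    then have no_entries: "{(box, e). box \<in> shifted_shape lam \<and> e \<in> S box \<and> fst e = k} = {}"
      using entry_value_in_support[OF S le] by fastforce
    show ?thesis
      unfolding wcontent_eq_sum_count[of T S lam k, OF T] no_entries using True by simp
  qed simp
  ultimately show ?thesis
    unfolding fun_eq_iff by blast
qed

lemma bij_betw_weak_svt_with_support:
  assumes S: "svt lam S" and le: "scontent lam S \<le> b"
  obtains \<phi> where "bij_betw \<phi> {T. weak_svt lam T \<and> wcontent lam T = b \<and> (\<forall>box. set_mset (T box) = S box)}
    (\<Pi>\<^sub>E k\<in>{k. b k \<noteq> 0}. compositions {(box, e). box \<in> shifted_shape lam \<and> e \<in> S box \<and> fst e = k} (b k))"
proof -
  define B where "B = {k. b k \<noteq> 0}"
  define D where "D = Sigma (shifted_shape lam) S"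
  define fibre where "fibre k = {x \<in> D. fst (snd x) = k}" for k
  define cnt :: "(nat \<times> nat \<Rightarrow> entry multiset) \<Rightarrow> (nat \<times> nat) \<times> entry \<Rightarrow> nat"
    where "cnt T = (\<lambda>(box, e). count (T box) e)" for T
  let ?Supported = "{T. \<forall>box. set_mset (T box) = S box}"
  have fibre_eq: "fibre k = {(box, e). box \<in> shifted_shape lam \<and> e \<in> S box \<and> fst e = k}" for k
    by (auto simp: fibre_def D_def)
  have "weak_svt lam T \<and> wcontent lam T = b \<longleftrightarrow> (\<forall>k\<in>B. sum (cnt T) (fibre k) = b k)"
    if T: "T \<in> ?Supported" for T
  proof -
    have T: "set_mset (T box) = S box" for box
      using T by blast
    have "wcontent lam T k = sum (cnt T) (fibre k)" for k
      using wcontent_eq_sum_count[of T S lam k, OF T] by (simp add: fibre_eq cnt_def)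
    then show ?thesis
      using weak_svt_with_support_iff[OF S le T] by (simp add: B_def)
  qed
  moreover have "bij_betw cnt ?Supported {\<nu>. {x. \<nu> x \<noteq> 0} = D}"
  proof -
    have "Sigma UNIV S = D"
      using svt_empty_outside_shape[OF S] by (auto simp: D_def)
    moreover have "bij_betw cnt ?Supported {\<nu>. {x. \<nu> x \<noteq> 0} = Sigma UNIV S}"
      unfolding cnt_def by (rule bij_betw_count_multiset_fillings) (rule svt_finite_box[OF S])
    ultimately show ?thesis
      by simp
  qed
  ultimately have "bij_betw cnt {T \<in> ?Supported. weak_svt lam T \<and> wcontent lam T = b}
                     {\<nu> \<in> {\<nu>. {x. \<nu> x \<noteq> 0} = D}. \<forall>k\<in>B. sum \<nu> (fibre k) = b k}"
    by (intro bij_betw_Collect) auto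
  moreover have "bij_betw (\<lambda>\<nu>. \<lambda>k\<in>B. \<lambda>x. if fst (snd x) = k then \<nu> x else 0)
                   {\<nu> \<in> {\<nu>. {x. \<nu> x \<noteq> 0} = D}. \<forall>k\<in>B. sum \<nu> (fibre k) = b k}
                   (\<Pi>\<^sub>E k\<in>B. compositions (fibre k) (b k))"
  proof -
    have "(\<lambda>x. fst (snd x)) ` D \<subseteq> B"
      using entry_value_in_support[OF S le] by (auto simp: D_def B_def)
    from bij_betw_fibrewise_compositions[OF this, of b] show ?thesis
      by (simp add: fibre_def)
  qed
  ultimately show ?thesis
    using that bij_betw_trans by (fastforce simp: B_def fibre_eq conj_commute)
qed

lemma weak_svt_with_support:
  assumes S: "svt lam S" and le: "scontent lam S \<le> b" and finB: "finite {k. b k \<noteq> 0}"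
  shows "finite {T. weak_svt lam T \<and> wcontent lam T = b \<and> (\<forall>box. set_mset (T box) = S box)}"
    and "card {T. weak_svt lam T \<and> wcontent lam T = b \<and> (\<forall>box. set_mset (T box) = S box)}
           = (\<Prod>k | b k \<noteq> 0. (b k - 1) choose (b k - scontent lam S k))"
proof -
  let ?Fibre = "{T. weak_svt lam T \<and> wcontent lam T = b \<and> (\<forall>box. set_mset (T box) = S box)}"
  let ?E = "\<lambda>k. {(box, e). box \<in> shifted_shape lam \<and> e \<in> S box \<and> fst e = k}"
  obtain \<phi> where bij: "bij_betw \<phi> ?Fibre (\<Pi>\<^sub>E k\<in>{k. b k \<noteq> 0}. compositions (?E k) (b k))"
    using bij_betw_weak_svt_with_support[OF S le] .
  have finite_E: "finite (?E k)" for k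
    by (rule finite_subset[of _ "Sigma (shifted_shape lam) S"]) (auto simp: svt_finite_box[OF S])
  show "finite ?Fibre"
    using bij_betw_finite[OF bij] finB finite_compositions[OF finite_E] by (simp add: finite_PiE)
  have "card ?Fibre = (\<Prod>k | b k \<noteq> 0. card (compositions (?E k) (b k)))"
    using bij_betw_same_card[OF bij] finB by (simp add: card_PiE)
  also have "\<dots> = (\<Prod>k | b k \<noteq> 0. (b k - 1) choose (b k - scontent lam S k))"
    using le by (intro prod.cong refl)
      (simp add: card_compositions finite_E scontent_eq_card_entries[symmetric] le_fun_def)
  finally show "card ?Fibre = (\<Prod>k | b k \<noteq> 0. (b k - 1) choose (b k - scontent lam S k))" .
qed

lemma scontent_set_mset_le_wcontent: "scontent lam (\<lambda>box. set_mset (T box)) \<le> wcontent lam T"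
proof (rule le_funI)
  fix k
  let ?E = "{(box, e). box \<in> shifted_shape lam \<and> e \<in># T box \<and> fst e = k}"
  have "finite ?E"
    by (rule finite_subset[of _ "Sigma (shifted_shape lam) (\<lambda>box. {e \<in> set_mset (T box). fst e = k})"])
      (auto simp: finite_entries_of_value)
  have "card ?E = (\<Sum>x \<in> ?E. 1)"
    by simp
  also have "\<dots> \<le> (\<Sum>(box, e) \<in> ?E. count (T box) e)"
    by (rule sum_mono) (auto simp: Suc_le_eq)
  finally have "card ?E \<le> (\<Sum>(box, e) \<in> ?E. count (T box) e)" .
  then show "scontent lam (\<lambda>box. set_mset (T box)) k \<le> wcontent lam T k"
    by (simp add: scontent_eq_card_entries wcontent_eq_sum_count)
qed

lemma K_series_eq_sum_over_supports:
  assumes "finite {k. b k \<noteq> 0}"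
  shows "K_series lam b = (\<Sum>S | svt lam S \<and> scontent lam S \<le> b.
           of_nat (\<Prod>k | b k \<noteq> 0. (b k - 1) choose (b k - scontent lam S k)))"
proof -
  let ?Supports = "{S. svt lam S \<and> scontent lam S \<le> b}"
  let ?Fibre = "\<lambda>S. {T. weak_svt lam T \<and> wcontent lam T = b \<and> (\<forall>box. set_mset (T box) = S box)}"
  have "{T. weak_svt lam T \<and> wcontent lam T = b} = (\<Union>S \<in> ?Supports. ?Fibre S)"
  proof (intro equalityI subsetI)
    fix T assume T: "T \<in> {T. weak_svt lam T \<and> wcontent lam T = b}"
    then have "(\<lambda>box. set_mset (T box)) \<in> ?Supports"
      using scontent_set_mset_le_wcontent[of lam T] by (simp add: weak_svt_iff_svt_set_mset)
    with T show "T \<in> (\<Union>S \<in> ?Supports. ?Fibre S)"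
      by blast
  qed blast
  moreover have "card (\<Union>S \<in> ?Supports. ?Fibre S) = (\<Sum>S \<in> ?Supports. card (?Fibre S))"
  proof (rule card_UN_disjoint)
    show "finite ?Supports"
      using assms by (rule finite_svt_bounded_content)
    show "\<forall>S \<in> ?Supports. finite (?Fibre S)"
      using weak_svt_with_support(1)[OF _ _ assms] by blast
    show "\<forall>S \<in> ?Supports. \<forall>S' \<in> ?Supports. S \<noteq> S' \<longrightarrow> ?Fibre S \<inter> ?Fibre S' = {}"
      by (auto simp: fun_eq_iff)
  qed
  ultimately have "K_series lam b = (\<Sum>S \<in> ?Supports. of_nat (card (?Fibre S)))"
    by (simp add: K_series_def)
  also have "\<dots> = (\<Sum>S \<in> ?Supports. of_nat (\<Prod>k | b k \<noteq> 0. (b k - 1) choose (b k - scontent lam S k)))"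
    by (intro sum.cong refl arg_cong[where f = of_nat] weak_svt_with_support(2)[OF _ _ assms]) auto
  finally show ?thesis .
qed

lemma subst_each_var_GP_series:
  assumes "finite {k. b k \<noteq> 0}"
  shows "subst_each_var g (GP_series lam) b
           = (\<Sum>S | svt lam S \<and> scontent lam S \<le> b.
                (-1) ^ (ssize lam S - psize lam) * (\<Prod>k | b k \<noteq> 0. fps_nth (g ^ scontent lam S k) (b k)))"
proof -
  define coeff where "coeff a = (\<Prod>k | b k \<noteq> 0. fps_nth (g ^ a k) (b k))" for a
  let ?Supports = "{S. svt lam S \<and> scontent lam S \<le> b}"
  have "finite {a. a \<le> b}"
  proof (rule finite_subset)
    let ?B = "{k. b k \<noteq> 0}"
    show "{a. a \<le> b} \<subseteq> {a. \<forall>k. (k \<in> ?B \<longrightarrow> a k \<in> {..Max (b ` ?B)}) \<and> (k \<notin> ?B \<longrightarrow> a k = 0)}"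
    proof (intro subsetI CollectI allI conjI impI)
      fix a k assume "a \<in> {a. a \<le> b}"
      then have a_le: "a k \<le> b k"
        by (simp add: le_fun_def)
      show "a k \<in> {..Max (b ` ?B)}" if "k \<in> ?B"
        using a_le that assms by (auto intro: order_trans Max_ge)
      show "a k = 0" if "k \<notin> ?B"
        using a_le that by simp
    qed
    show "finite {a. \<forall>k. (k \<in> ?B \<longrightarrow> a k \<in> {..Max (b ` ?B)}) \<and> (k \<notin> ?B \<longrightarrow> a k = 0)}"
      using assms by (intro finite_set_of_finite_funs) simp_all
  qed
  have "subst_each_var g (GP_series lam) b = (\<Sum>a | a \<le> b. GP_series lam a * coeff a)"
    by (simp add: subst_each_var_def coeff_def le_fun_def)
  also have "\<dots> = (\<Sum>a | a \<le> b. \<Sum>S | S \<in> ?Supports \<and> scontent lam S = a.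
                     (-1) ^ (ssize lam S - psize lam) * coeff (scontent lam S))"
    by (intro sum.cong refl) (auto simp: GP_series_def sum_distrib_right intro!: sum.cong)
  also have "\<dots> = (\<Sum>S \<in> ?Supports. (-1) ^ (ssize lam S - psize lam) * coeff (scontent lam S))"
    using finite_svt_bounded_content[OF assms] \<open>finite {a. a \<le> b}\<close> by (intro sum.group) auto
  finally show ?thesis
    by (simp add: coeff_def)
qed

lemma of_nat_prod_binomial_eq_signed_GP_term:
  assumes S: "svt lam S" and le: "scontent lam S \<le> b" and finB: "finite {k. b k \<noteq> 0}"
  shows "of_nat (\<Prod>k | b k \<noteq> 0. (b k - 1) choose (b k - scontent lam S k))
         = (-1) ^ psize lam * ((-1) ^ (ssize lam S - psize lam)
           * (\<Prod>k | b k \<noteq> 0. fps_nth ((- fps_X / (1 - fps_X) :: 'a :: field_char_0 fps) ^ scontent lam S k) (b k)))"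
proof -
  have ssize: "ssize lam S = (\<Sum>k | b k \<noteq> 0. scontent lam S k)"
    using ssize_eq_sum_scontent[OF S finB] entry_value_in_support[OF S le] by blast
  have "(\<Prod>k | b k \<noteq> 0. fps_nth ((- fps_X / (1 - fps_X) :: 'a fps) ^ scontent lam S k) (b k))
          = (\<Prod>k | b k \<noteq> 0. (-1) ^ scontent lam S k * of_nat ((b k - 1) choose (b k - scontent lam S k)))"
    using le by (intro prod.cong refl fps_nth_power_neg_X_div_one_minus_X) (auto simp: le_fun_def)
  also have "\<dots> = (-1) ^ ssize lam S * of_nat (\<Prod>k | b k \<noteq> 0. (b k - 1) choose (b k - scontent lam S k))"
    by (simp add: ssize prod.distrib power_sum)
  finally have coeff: "(\<Prod>k | b k \<noteq> 0. fps_nth ((- fps_X / (1 - fps_X) :: 'a fps) ^ scontent lam S k) (b k))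
                       = (-1) ^ ssize lam S * of_nat (\<Prod>k | b k \<noteq> 0. (b k - 1) choose (b k - scontent lam S k))" .
  obtain d where "ssize lam S = psize lam + d"
    using psize_le_ssize[OF S] le_Suc_ex by blast
  then show ?thesis
    unfolding coeff by (simp add: power_add algebra_simps flip: power_mult_distrib)
qed

theorem proposition3:
  fixes lam :: "nat list" and b :: "nat \<Rightarrow> nat"
  assumes "strict_partition lam"
    and "finite {k. b k \<noteq> 0}"
  shows "K_series lam b =
           (-1) ^ psize lam * subst_each_var (- fps_X / (1 - fps_X)) (GP_series lam) b"
  \<comment> \<open>The argument never uses that lam is strictly decreasing.\<close>
proof -
  have "K_series lam b = (\<Sum>S | svt lam S \<and> scontent lam S \<le> b.
          of_nat (\<Prod>k | b k \<noteq> 0. (b k - 1) choose (b k - scontent lam S k)))"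
    using assms(2) by (rule K_series_eq_sum_over_supports)
  also have "\<dots> = (\<Sum>S | svt lam S \<and> scontent lam S \<le> b. (-1) ^ psize lam * ((-1) ^ (ssize lam S - psize lam)
          * (\<Prod>k | b k \<noteq> 0. fps_nth ((- fps_X / (1 - fps_X)) ^ scontent lam S k) (b k))))"
    by (intro sum.cong refl of_nat_prod_binomial_eq_signed_GP_term[OF _ _ assms(2)]) auto
  also have "\<dots> = (-1) ^ psize lam * subst_each_var (- fps_X / (1 - fps_X)) (GP_series lam) b"
    using assms(2) by (simp add: subst_each_var_GP_series sum_distrib_left)
  finally show ?thesis .
qed

end
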